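(* Let $\mathcal{C}$ be a BMZ-collection, $\mathcal{R}\in\mathbf{R}$, and $a\in C\setminus\{z\}$. Then there is exactly one $\mathcal{R}'\in\mathbf{R}$ with $\mathcal{R}'\neq\mathcal{R}$ and $\Phi(\mathcal{R}-z-a)\subseteq\Phi(\mathcal{R}'-z)$ (i.e., having $\operatorname{conv}(\Phi(\mathcal{R}-z-a))$ as a face), and it satisfies $\operatorname{csgn}(\mathcal{R}')=-\operatorname{csgn}(\mathcal{R})$.
   Context: Standing notation: $N=(d+1)(r-1)$; $w_1,\ldots,w_r\in\mathbb{R}^{r-1}$ the vertices of a regular $(r-1)$-simplex centered at $0$; $\varphi_i(x)=(x,1)\otimes w_i\in\mathbb{R}^N$; for an $r$-tuple $\mathcal{P}=(P_1,\ldots,P_r)$ of pairwise disjoint finite sets, $\Phi(\mathcal{P})=\bigcup_i\{\varphi_i(p):p\in P_i\}$. A BMZ-collection is $\mathcal{C}=(C_1,\ldots,C_{d+2})$, pairwise disjoint finite subsets of $\mathbb{R}^d$, $|C_1|=\cdots=|C_{d+1}|=r-1$, $C_{d+2}=\{z\}$; ground set $C=\{c_1,\ldots,c_{N+1}\}$, $c_{N+1}=z$, $C_k=\{c_{(k-1)(r-1)+1},\ldots,c_{k(r-1)}\}$ for $k\le d+1$. Rainbow $r$-partition: $r$-tuple $(R_1,\ldots,R_r)$ of pairwise disjoint subsets of $C$ with $|R_i\cap C_j|\le1$; maximal if it covers $C$. $\mathbf{R}$: maximal rainbow $r$-partitions with $z\in R_r$. $\mathcal{R}-a$: remove $a$ from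 its class. For $\mathcal{R}\in\mathbf{R}$ and $k\in[d+1]$, $\pi_k$ is the permutation of $[r]$ with $\pi_k(j)=i$ where $c_{(k-1)(r-1)+j}\in R_i$ ($j\in[r-1]$) and $\pi_k(r)$ the unique remaining index; $\operatorname{csgn}(\mathcal{R})=\prod_{k=1}^{d+1}\operatorname{sgn}\pi_k$. *)

theory Defs
  imports "HOL-Analysis.Analysis" "HOL-Combinatorics.Permutations"
begin

text \<open>Points of R^d are vectors of type real^'d (d = CARD('d)).
  The ground set C is given by an indexing c : nat => point, c_1,...,c_(N+1),
  with N = (d+1)(r-1) and z = c_(N+1).\<close>

definition bmzN :: "nat \<Rightarrow> nat \<Rightarrow> nat" where
  "bmzN d r = (d + 1) * (r - 1)"

definition bmz_z :: "nat \<Rightarrow> nat \<Rightarrow> (nat \<Rightarrow> 'a) \<Rightarrow> 'a" where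
  "bmz_z d r c = c (bmzN d r + 1)"

definition bmz_ground :: "nat \<Rightarrow> nat \<Rightarrow> (nat \<Rightarrow> 'a) \<Rightarrow> 'a set" where
  "bmz_ground d r c = c ` {1 .. bmzN d r + 1}"

definition bmz_block :: "nat \<Rightarrow> nat \<Rightarrow> (nat \<Rightarrow> 'a) \<Rightarrow> nat \<Rightarrow> 'a set" where
  "bmz_block d r c k =
     (if k = d + 2 then {bmz_z d r c} else c ` {(k - 1) * (r - 1) + 1 .. k * (r - 1)})"

text \<open>An r-tuple (R_1,...,R_r) is represented as a function nat => set, with R i = {}
  for i outside {1..r}.\<close>
definition rainbow_partition :: "nat \<Rightarrow> nat \<Rightarrow> (nat \<Rightarrow> 'a) \<Rightarrow> (nat \<Rightarrow> 'a set) \<Rightarrow> bool" where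
  "rainbow_partition d r c R \<longleftrightarrow>
     (\<forall>i. i \<notin> {1..r} \<longrightarrow> R i = {}) \<and>
     (\<forall>i\<in>{1..r}. R i \<subseteq> bmz_ground d r c) \<and>
     (\<forall>i\<in>{1..r}. \<forall>j\<in>{1..r}. i \<noteq> j \<longrightarrow> R i \<inter> R j = {}) \<and>
     (\<forall>i\<in>{1..r}. \<forall>k\<in>{1..d+2}. card (R i \<inter> bmz_block d r c k) \<le> 1)"

definition maximal_rainbow_partition :: "nat \<Rightarrow> nat \<Rightarrow> (nat \<Rightarrow> 'a) \<Rightarrow> (nat \<Rightarrow> 'a set) \<Rightarrow> bool" where
  "maximal_rainbow_partition d r c R \<longleftrightarrow>
     rainbow_partition d r c R \<and> (\<Union>i\<in>{1..r}. R i) = bmz_ground d r c"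

definition bmz_R :: "nat \<Rightarrow> nat \<Rightarrow> (nat \<Rightarrow> 'a) \<Rightarrow> (nat \<Rightarrow> 'a set) set" where
  "bmz_R d r c = {R. maximal_rainbow_partition d r c R \<and> bmz_z d r c \<in> R r}"

definition remove_pt :: "(nat \<Rightarrow> 'a set) \<Rightarrow> 'a \<Rightarrow> (nat \<Rightarrow> 'a set)" where
  "remove_pt R a = (\<lambda>i. R i - {a})"

definition regular_simplex_centered :: "nat \<Rightarrow> (nat \<Rightarrow> real^'m) \<Rightarrow> bool" where
  "regular_simplex_centered r w \<longleftrightarrow>
     (\<Sum>i=1..r. w i) = 0 \<and>
     (\<exists>s>0. \<forall>i\<in>{1..r}. \<forall>j\<in>{1..r}. i \<noteq> j \<longrightarrow> dist (w i) (w j) = s)"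

text \<open>phi_i(x) = (x,1) tensor w_i in R^((d+1)(r-1)), realized as the (d+1) x (r-1) array;
  the extra coordinate "1" of (x,1) is indexed by None.\<close>
definition bmz_phi :: "(nat \<Rightarrow> real^'m) \<Rightarrow> nat \<Rightarrow> real^'d \<Rightarrow> real^'m^('d option)" where
  "bmz_phi w i x = (\<chi> j l. (case j of None \<Rightarrow> 1 | Some t \<Rightarrow> x $ t) * (w i $ l))"

definition bmz_Phi :: "(nat \<Rightarrow> real^'m) \<Rightarrow> nat \<Rightarrow> (nat \<Rightarrow> (real^'d) set) \<Rightarrow> (real^'m^('d option)) set" where
  "bmz_Phi w r P = (\<Union>i\<in>{1..r}. bmz_phi w i ` P i)"

definition bmz_cls :: "nat \<Rightarrow> (nat \<Rightarrow> 'a set) \<Rightarrow> 'a \<Rightarrow> nat" where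
  "bmz_cls r R p = (THE i. i \<in> {1..r} \<and> p \<in> R i)"

definition bmz_pi :: "nat \<Rightarrow> (nat \<Rightarrow> 'a) \<Rightarrow> (nat \<Rightarrow> 'a set) \<Rightarrow> nat \<Rightarrow> nat \<Rightarrow> nat" where
  "bmz_pi r c R k = (\<lambda>j.
     if j \<in> {1..r-1} then bmz_cls r R (c ((k - 1) * (r - 1) + j))
     else if j = r then
       (THE i. i \<in> {1..r} \<and> i \<notin> (\<lambda>j'. bmz_cls r R (c ((k - 1) * (r - 1) + j'))) ` {1..r-1})
     else j)"

definition csgn :: "nat \<Rightarrow> nat \<Rightarrow> (nat \<Rightarrow> 'a) \<Rightarrow> (nat \<Rightarrow> 'a set) \<Rightarrow> int" where
  "csgn d r c R = (\<Prod>k=1..d+1. sign (bmz_pi r c R k))"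

end

theory Submission
  imports Defs
begin

(* Since the vectors phi_i(x) = (x,1) (x) w_i are pairwise distinct (the w_i are distinct and
   nonzero), Phi(P) is contained in Phi(Q) exactly when P_i is contained in Q_i for every
   class i.  So the theorem is purely combinatorial: given R in bold-R and a point a != z of
   the colour class C_k, the partitions R' != R in bold-R with R - z - a contained in R' - z
   classwise are to be shown to be exactly one.

   The classes of R met by the r-1 points of C_k form an injection of [r-1] into [r];
   exactly one class m misses C_k, and pi_k is this injection completed by pi_k(r) = m.
   Moving a into class m gives a partition R' in bold-R; it is the only possibility, since
   R' must agree with R off a, and a can only go to a class avoiding C_k.  The move changes
   only pi_k, by composing it with the transposition of m and the old class of a, so the
   sign csgn flips. *)

definition perm_completion :: "nat \<Rightarrow> (nat \<Rightarrow> nat) \<Rightarrow> nat \<Rightarrow> nat" where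
  "perm_completion r g = (\<lambda>j. if j \<in> {1..r-1} then g j
     else if j = r then (THE i. i \<in> {1..r} \<and> i \<notin> g ` {1..r-1}) else j)"

lemma completion_unique:
  assumes r: "r \<ge> 1" and q: "q permutes {1..r}" and ext: "\<And>j. j \<in> {1..r-1} \<Longrightarrow> q j = g j"
  shows "perm_completion r g = q"
proof
  fix j
  have top: "(THE i. i \<in> {1..r} \<and> i \<notin> g ` {1..r-1}) = q r"
  proof (rule the_equality)
    have "q r \<notin> q ` {1..r-1}"
    proof
      assume "q r \<in> q ` {1..r-1}"
      then obtain x where "x \<in> {1..r-1}" "q r = q x" by blast
      moreover have "q r = q x \<Longrightarrow> r = x" using permutes_inj[OF q] by (rule injD)
      ultimately show False by auto
    qed
    moreover have "q ` {1..r-1} = g ` {1..r-1}" using ext by (rule image_cong[OF refl])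
    moreover have "q r \<in> {1..r}" using r by (subst permutes_in_image[OF q]) simp
    ultimately show "q r \<in> {1..r} \<and> q r \<notin> g ` {1..r-1}" by simp
  next
    fix i assume i: "i \<in> {1..r} \<and> i \<notin> g ` {1..r-1}"
    then obtain j' where "j' \<in> {1..r}" "i = q j'"
      using permutes_image[OF q] by (metis imageE)
    with i ext show "i = q r" by (cases "j' = r") auto
  qed
  show "perm_completion r g j = q j"
    using ext top permutes_not_in[OF q] by (auto simp: perm_completion_def)
qed

lemma perm_completion_cong:
  assumes "\<And>j. j \<in> {1..r-1} \<Longrightarrow> g j = g' j"
  shows "perm_completion r g = perm_completion r g'"
proof -
  have "g ` {1..r-1} = g' ` {1..r-1}" using assms by (rule image_cong[OF refl])
  then show ?thesis using assms by (auto simp: perm_completion_def)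
qed

locale partial_perm =
  fixes r :: nat and g :: "nat \<Rightarrow> nat"
  assumes r_pos: "r \<ge> 1"
    and inj_g: "inj_on g {1..r-1}"
    and g_into: "g ` {1..r-1} \<subseteq> {1..r}"
begin

lemma missing_value_exists: "\<exists>m. {1..r} - g ` {1..r-1} = {m}"
proof -
  have "card (g ` {1..r-1}) = r - 1" using inj_g by (simp add: card_image)
  then have "card ({1..r} - g ` {1..r-1}) = 1"
    using g_into r_pos by (simp add: card_Diff_subset)
  then show ?thesis by (simp add: card_1_singleton_iff)
qed

definition missing :: nat where
  "missing = (THE i. i \<in> {1..r} \<and> i \<notin> g ` {1..r-1})"

lemma missing_eq: "{1..r} - g ` {1..r-1} = {missing}"
proof -
  obtain m where m: "{1..r} - g ` {1..r-1} = {m}" using missing_value_exists by blast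
  have "missing = m" unfolding missing_def by (rule the_equality) (use m in blast)+
  with m show ?thesis by simp
qed

lemma missing_in: "missing \<in> {1..r}" and missing_notin: "missing \<notin> g ` {1..r-1}"
  using missing_eq by auto

lemma completion_low: "j \<in> {1..r-1} \<Longrightarrow> perm_completion r g j = g j"
  by (simp add: perm_completion_def)

lemma completion_top: "perm_completion r g r = missing"
proof -
  have "r \<notin> {1..r-1}" using r_pos by auto
  then show ?thesis by (simp only: perm_completion_def missing_def if_not_P if_P[OF refl] if_False)
qed

lemma completion_out: "j \<notin> {1..r} \<Longrightarrow> perm_completion r g j = j"
  using r_pos by (auto simp: perm_completion_def)

lemma completion_image: "perm_completion r g ` {1..r} = {1..r}"
proof -
  have "{1..r} = insert r {1..r-1}" using r_pos by auto
  then have "perm_completion r g ` {1..r} = insert missing (g ` {1..r-1})"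
    using completion_low completion_top by simp
  also have "\<dots> = {1..r}" using missing_eq g_into by blast
  finally show ?thesis .
qed

lemma completion_permutes: "perm_completion r g permutes {1..r}"
proof (rule bij_imp_permutes)
  show "bij_betw (perm_completion r g) {1..r} {1..r}"
    using completion_image by (simp add: bij_betw_def eq_card_imp_inj_on)
qed (rule completion_out)

text \<open>Redirecting one value of g to the missing value composes the completion with a
  transposition, so the sign flips.\<close>
lemma completion_redirect_sign:
  assumes ja: "ja \<in> {1..r-1}"
    and agree: "\<And>j. j \<in> {1..r-1} \<Longrightarrow> j \<noteq> ja \<Longrightarrow> g' j = g j"
    and redirect: "g' ja = missing"
  shows "sign (perm_completion r g') = - sign (perm_completion r g)"
proof -
  let ?q = "Transposition.transpose (g ja) missing \<circ> perm_completion r g"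
  have "g ja \<in> g ` {1..r-1}" using ja by (rule imageI)
  then have g_ja: "g ja \<in> {1..r}" "g ja \<noteq> missing" using g_into missing_notin by auto
  have q: "?q permutes {1..r}"
    using permutes_compose[OF completion_permutes permutes_swap_id[OF g_ja(1) missing_in]] .
  have "perm_completion r g' = ?q"
  proof (rule completion_unique[OF r_pos q])
    fix j assume j: "j \<in> {1..r-1}"
    show "?q j = g' j"
    proof (cases "j = ja")
      case True
      then show ?thesis using redirect completion_low[OF ja] by simp
    next
      case False
      then have "g j \<noteq> g ja" using inj_g j ja by (auto dest: inj_onD)
      moreover have "g j \<noteq> missing" using imageI[OF j, of g] missing_notin by metis
      ultimately show ?thesis using False j agree completion_low by (simp add: transpose_def)
    qed
  qed
  moreover have "permutation (perm_completion r g)"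
    by (rule permutes_imp_permutation[OF _ completion_permutes]) simp
  ultimately show ?thesis
    using g_ja(2) by (simp add: sign_compose permutation_swap_id sign_swap_id)
qed

end

text \<open>Mixed-radix indexing: position j of block k is the index (k-1)q + j.\<close>
lemma block_index_inj:
  fixes k k' j j' q :: nat
  assumes "k \<ge> 1" "k' \<ge> 1" "j \<in> {1..q}" "j' \<in> {1..q}"
    and eq: "(k-1)*q + j = (k'-1)*q + j'"
  shows "k = k' \<and> j = j'"
proof -
  have small: "j - 1 < q" "j' - 1 < q" using assms by auto
  have eq': "(k-1)*q + (j-1) = (k'-1)*q + (j'-1)" using eq assms by auto
  have "k - 1 = ((k-1)*q + (j-1)) div q" "j - 1 = ((k-1)*q + (j-1)) mod q"
    using small by simp_all
  moreover have "k' - 1 = ((k'-1)*q + (j'-1)) div q" "j' - 1 = ((k'-1)*q + (j'-1)) mod q"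
    using small by simp_all
  ultimately have "k - 1 = k' - 1" "j - 1 = j' - 1" using eq' by metis+
  then show ?thesis using assms by auto
qed

lemma block_index_bounds:
  fixes k j q d :: nat
  assumes "k \<in> {1..d+1}" "j \<in> {1..q}"
  shows "(k-1)*q + j \<in> {1..(d+1)*q}"
proof -
  have "(k-1)*q + j \<le> (k-1)*q + q" using assms by auto
  also have "\<dots> = k*q" using assms by (cases k) auto
  also have "\<dots> \<le> (d+1)*q" using assms by (intro mult_le_mono1) auto
  finally show ?thesis using assms by auto
qed

lemma block_index_surj:
  fixes t q d :: nat
  assumes "t \<in> {1..(d+1)*q}"
  shows "\<exists>k\<in>{1..d+1}. \<exists>j\<in>{1..q}. t = (k-1)*q + j"
proof -
  have q: "q > 0" using assms by (cases q) auto
  define k where "k = (t-1) div q + 1"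
  define j where "j = (t-1) mod q + 1"
  have "t - 1 < (d+1)*q" using assms by auto
  then have "(t-1) div q < d + 1" using q by (simp add: div_less_iff_less_mult)
  then have "k \<in> {1..d+1}" unfolding k_def by auto
  moreover have "j \<in> {1..q}" unfolding j_def using q by (auto simp: Suc_le_eq)
  moreover have "t = (k-1)*q + j" using assms unfolding k_def j_def by simp
  ultimately show ?thesis by blast
qed

locale bmz_collection =
  fixes d r :: nat and c :: "nat \<Rightarrow> 'a"
  assumes r_ge_2: "r \<ge> 2"
    and c_inj: "inj_on c {1 .. bmzN d r + 1}"
begin

abbreviation "ground \<equiv> bmz_ground d r c"
abbreviation "z \<equiv> bmz_z d r c"
abbreviation "block \<equiv> bmz_block d r c"

definition elt :: "nat \<Rightarrow> nat \<Rightarrow> 'a" where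
  "elt k j = c ((k - 1) * (r - 1) + j)"

lemma elt_index: "k \<in> {1..d+1} \<Longrightarrow> j \<in> {1..r-1} \<Longrightarrow> (k-1)*(r-1)+j \<in> {1..bmzN d r}"
  using block_index_bounds[of k d j "r-1"] by (simp add: bmzN_def)

lemma elt_in_ground:
  assumes "k \<in> {1..d+1}" "j \<in> {1..r-1}"
  shows "elt k j \<in> ground"
proof -
  have "(k-1)*(r-1)+j \<in> {1..bmzN d r + 1}" using elt_index[OF assms] by auto
  then show ?thesis unfolding elt_def bmz_ground_def by (rule imageI)
qed

lemma elt_inj:
  assumes "k \<in> {1..d+1}" "j \<in> {1..r-1}" "k' \<in> {1..d+1}" "j' \<in> {1..r-1}"
    and "elt k j = elt k' j'"
  shows "k = k' \<and> j = j'"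
proof -
  have "(k-1)*(r-1)+j = (k'-1)*(r-1)+j'"
    using inj_onD[OF c_inj] assms elt_index[of k j] elt_index[of k' j'] by (auto simp: elt_def)
  then show ?thesis using block_index_inj[of k k' j "r-1" j'] assms by auto
qed

lemma elt_ne_z: "k \<in> {1..d+1} \<Longrightarrow> j \<in> {1..r-1} \<Longrightarrow> elt k j \<noteq> z"
  using inj_onD[OF c_inj, of "(k-1)*(r-1)+j" "bmzN d r + 1"] elt_index[of k j]
  by (auto simp: elt_def bmz_z_def)

lemma ground_elt:
  assumes "p \<in> ground" "p \<noteq> z"
  obtains k j where "k \<in> {1..d+1}" "j \<in> {1..r-1}" "p = elt k j"
proof -
  obtain t where t: "t \<in> {1..bmzN d r + 1}" "p = c t" using assms by (auto simp: bmz_ground_def)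
  moreover have "t \<noteq> bmzN d r + 1" using assms(2) t by (auto simp: bmz_z_def)
  ultimately have "t \<in> {1..(d+1)*(r-1)}" by (auto simp: bmzN_def)
  then show ?thesis using that block_index_surj[of t d "r-1"] t by (auto simp: elt_def)
qed

lemma block_eq: "k \<in> {1..d+1} \<Longrightarrow> block k = elt k ` {1..r-1}"
proof -
  assume k: "k \<in> {1..d+1}"
  have "k * (r-1) = (r-1) + (k-1)*(r-1)" using k by (cases k) auto
  then have idx: "{(k-1)*(r-1) + 1 .. k*(r-1)} = plus ((k-1)*(r-1)) ` {1..r-1}"
    by (simp add: add.commute)
  have "block k = c ` {(k-1)*(r-1) + 1 .. k*(r-1)}" using k by (simp add: bmz_block_def)
  also have "\<dots> = elt k ` {1..r-1}" unfolding idx image_image elt_def by simp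
  finally show ?thesis .
qed

lemma elt_in_block: "k \<in> {1..d+1} \<Longrightarrow> j \<in> {1..r-1} \<Longrightarrow> elt k j \<in> block k"
  using block_eq by simp

lemma finite_block: "finite (block k)"
  by (simp add: bmz_block_def)

lemma block_of_elt:
  assumes "k \<in> {1..d+1}" "j \<in> {1..r-1}" "k' \<in> {1..d+2}" "elt k j \<in> block k'"
  shows "k' = k"
proof (cases "k' = d + 2")
  case True
  then show ?thesis using assms elt_ne_z by (simp add: bmz_block_def)
next
  case False
  then obtain j' where "j' \<in> {1..r-1}" "elt k j = elt k' j'"
    using assms block_eq[of k'] by auto
  then show ?thesis using elt_inj assms False by force
qed

end

text \<open>No vertex of a regular simplex centred at the origin is the origin: otherwise all
  other vertices would have pairwise nonnegative inner products, contradicting the fact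
  that they sum to zero.\<close>
lemma regular_simplex_vertex_nonzero:
  fixes w :: "nat \<Rightarrow> real^'m"
  assumes r: "r \<ge> 2" and reg: "regular_simplex_centered r w" and i: "i \<in> {1..r}"
  shows "w i \<noteq> 0"
proof
  assume wi: "w i = 0"
  obtain s where s: "s > 0"
    and dist_s: "\<And>a b. a \<in> {1..r} \<Longrightarrow> b \<in> {1..r} \<Longrightarrow> a \<noteq> b \<Longrightarrow> dist (w a) (w b) = s"
    using reg unfolding regular_simplex_centered_def by blast
  have sum0: "(\<Sum>l=1..r. w l) = 0" using reg unfolding regular_simplex_centered_def by blast
  obtain j where j: "j \<in> {1..r}" "j \<noteq> i"
    using r by (cases "i = 1") (auto intro: that[of 1] that[of 2])
  have norm_sq: "w l \<bullet> w l = s\<^sup>2" if "l \<in> {1..r}" "l \<noteq> i" for l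
    using dist_s[OF that(1) i that(2)] wi by (simp add: dist_norm flip: power2_norm_eq_inner)
  have inner_nonneg: "w l \<bullet> w j \<ge> 0" if l: "l \<in> {1..r}" for l
  proof (cases "l = i \<or> l = j")
    case False
    then have "(w l - w j) \<bullet> (w l - w j) = s\<^sup>2"
      using dist_s[OF l j(1)] by (simp add: dist_norm flip: power2_norm_eq_inner)
    then have "2 * (w l \<bullet> w j) = s\<^sup>2"
      using norm_sq[OF l] norm_sq[OF j] False by (simp add: inner_diff inner_commute)
    then show ?thesis using zero_le_power2[of s] by linarith
  qed (auto simp: wi)
  have "0 = (\<Sum>l=1..r. w l) \<bullet> w j" using sum0 by simp
  also have "\<dots> = (\<Sum>l=1..r. w l \<bullet> w j)" by (simp add: inner_sum_left)
  also have "\<dots> \<ge> w j \<bullet> w j" by (rule member_le_sum) (use inner_nonneg j in auto)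
  finally show False using norm_sq[OF j] s by simp
qed

text \<open>The embeddings phi_i of R^d are jointly injective: phi_i(x) determines i and x.
  The None-row of phi_i(x) is w_i, and w_i is a nonzero vector.\<close>
lemma bmz_phi_inj:
  fixes w :: "nat \<Rightarrow> real^'m" and x y :: "real^'d"
  assumes r: "r \<ge> 2" and reg: "regular_simplex_centered r w"
    and i: "i \<in> {1..r}" and j: "j \<in> {1..r}" and eq: "bmz_phi w i x = bmz_phi w j y"
  shows "i = j \<and> x = y"
proof -
  have entry: "bmz_phi w i x $ a $ b = bmz_phi w j y $ a $ b" for a b using eq by simp
  have "w i = w j" using entry[of None] by (simp add: bmz_phi_def vec_eq_iff)
  then have ij: "i = j"
    using reg i j unfolding regular_simplex_centered_def by force
  obtain l where l: "w i $ l \<noteq> 0"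
    using regular_simplex_vertex_nonzero[OF r reg i] by (auto simp: vec_eq_iff)
  have "x $ t = y $ t" for t using entry[of "Some t" l] ij l by (simp add: bmz_phi_def)
  then show ?thesis using ij by (simp add: vec_eq_iff)
qed

lemma bmz_Phi_subset_iff:
  fixes w :: "nat \<Rightarrow> real^'m" and P Q :: "nat \<Rightarrow> (real^'d) set"
  assumes r: "r \<ge> 2" and reg: "regular_simplex_centered r w"
  shows "bmz_Phi w r P \<subseteq> bmz_Phi w r Q \<longleftrightarrow> (\<forall>i\<in>{1..r}. P i \<subseteq> Q i)"
proof
  assume sub: "bmz_Phi w r P \<subseteq> bmz_Phi w r Q"
  show "\<forall>i\<in>{1..r}. P i \<subseteq> Q i"
  proof (intro ballI subsetI)
    fix i p assume i: "i \<in> {1..r}" and p: "p \<in> P i"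
    then have "bmz_phi w i p \<in> bmz_Phi w r Q" using sub unfolding bmz_Phi_def by blast
    then obtain j q where "j \<in> {1..r}" "q \<in> Q j" "bmz_phi w i p = bmz_phi w j q"
      unfolding bmz_Phi_def by blast
    then show "p \<in> Q i" using bmz_phi_inj[OF r reg i] by blast
  qed
qed (auto simp: bmz_Phi_def)

context bmz_collection
begin

abbreviation "cls R \<equiv> bmz_cls r R"

lemma bmz_R_intro:
  assumes "\<And>i. i \<notin> {1..r} \<Longrightarrow> R i = {}"
    and "\<And>i. i \<in> {1..r} \<Longrightarrow> R i \<subseteq> ground"
    and "\<And>i j p. i \<in> {1..r} \<Longrightarrow> j \<in> {1..r} \<Longrightarrow> p \<in> R i \<Longrightarrow> p \<in> R j \<Longrightarrow> i = j"
    and "\<And>i k p p'. i \<in> {1..r} \<Longrightarrow> k \<in> {1..d+2} \<Longrightarrow> p \<in> R i \<Longrightarrow> p \<in> block k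
           \<Longrightarrow> p' \<in> R i \<Longrightarrow> p' \<in> block k \<Longrightarrow> p = p'"
    and "\<And>p. p \<in> ground \<Longrightarrow> \<exists>i\<in>{1..r}. p \<in> R i"
    and "z \<in> R r"
  shows "R \<in> bmz_R d r c"
proof -
  have "card (R i \<inter> block k) \<le> 1" if "i \<in> {1..r}" "k \<in> {1..d+2}" for i k
    using assms(4)[OF that] finite_block[of k] by (auto simp: card_le_Suc0_iff_eq)
  moreover have "R i \<inter> R j = {}" if "i \<in> {1..r}" "j \<in> {1..r}" "i \<noteq> j" for i j
    using assms(3) that by blast
  moreover have "(\<Union>i\<in>{1..r}. R i) = ground" using assms(2,5) by blast
  ultimately show ?thesis using assms(1,2,6)
    by (simp add: bmz_R_def maximal_rainbow_partition_def rainbow_partition_def)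
qed

context
  fixes R :: "nat \<Rightarrow> 'a set"
  assumes R: "R \<in> bmz_R d r c"
begin

lemma class_outside: "i \<notin> {1..r} \<Longrightarrow> R i = {}"
  using R by (auto simp: bmz_R_def maximal_rainbow_partition_def rainbow_partition_def)

lemma class_in_ground: "i \<in> {1..r} \<Longrightarrow> R i \<subseteq> ground"
  using R by (auto simp: bmz_R_def maximal_rainbow_partition_def rainbow_partition_def)

lemma classes_disjoint: "i \<in> {1..r} \<Longrightarrow> j \<in> {1..r} \<Longrightarrow> p \<in> R i \<Longrightarrow> p \<in> R j \<Longrightarrow> i = j"
  using R unfolding bmz_R_def maximal_rainbow_partition_def rainbow_partition_def by blast

lemma classes_cover: "p \<in> ground \<Longrightarrow> \<exists>i\<in>{1..r}. p \<in> R i"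
  using R unfolding bmz_R_def maximal_rainbow_partition_def by blast

lemma z_in_last_class: "z \<in> R r"
  using R unfolding bmz_R_def by blast

lemma rainbow:
  assumes "i \<in> {1..r}" "k \<in> {1..d+2}" "p \<in> R i" "p \<in> block k" "p' \<in> R i" "p' \<in> block k"
  shows "p = p'"
proof -
  have "card (R i \<inter> block k) \<le> 1"
    using R assms(1,2) unfolding bmz_R_def maximal_rainbow_partition_def rainbow_partition_def
    by blast
  then show ?thesis using assms finite_block[of k] by (auto simp: card_le_Suc0_iff_eq)
qed

lemma cls_eq: "i \<in> {1..r} \<Longrightarrow> p \<in> R i \<Longrightarrow> cls R p = i"
  unfolding bmz_cls_def by (rule the_equality) (use classes_disjoint in blast)+

lemma cls_in: "p \<in> ground \<Longrightarrow> cls R p \<in> {1..r}"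
  and mem_cls: "p \<in> ground \<Longrightarrow> p \<in> R (cls R p)"
  using classes_cover cls_eq by metis+

lemma mem_iff_cls: "i \<in> {1..r} \<Longrightarrow> p \<in> R i \<longleftrightarrow> p \<in> ground \<and> cls R p = i"
  using class_in_ground cls_eq mem_cls by blast

end

lemma bmz_R_eqI:
  assumes R1: "R1 \<in> bmz_R d r c" and R2: "R2 \<in> bmz_R d r c"
    and same: "\<And>p. p \<in> ground \<Longrightarrow> cls R1 p = cls R2 p"
  shows "R1 = R2"
proof
  fix i
  show "R1 i = R2 i"
    using class_outside[OF R1] class_outside[OF R2] mem_iff_cls[OF R1] mem_iff_cls[OF R2] same
    by (cases "i \<in> {1..r}") auto
qed

definition block_classes :: "(nat \<Rightarrow> 'a set) \<Rightarrow> nat \<Rightarrow> nat \<Rightarrow> nat" where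
  "block_classes R k = (\<lambda>j. cls R (elt k j))"

lemma bmz_pi_eq: "bmz_pi r c R k = perm_completion r (block_classes R k)"
  unfolding bmz_pi_def perm_completion_def block_classes_def elt_def by (rule refl)

context
  fixes R :: "nat \<Rightarrow> 'a set"
  assumes R: "R \<in> bmz_R d r c"
begin

text \<open>By rainbowness the block classes of C_k are pairwise distinct.\<close>
lemma block_classes_partial_perm:
  assumes k: "k \<in> {1..d+1}"
  shows "partial_perm r (block_classes R k)"
proof
  show "r \<ge> 1" using r_ge_2 by simp
  show "block_classes R k ` {1..r-1} \<subseteq> {1..r}"
    using cls_in[OF R elt_in_ground[OF k]] by (auto simp: block_classes_def)
  show "inj_on (block_classes R k) {1..r-1}"
  proof (rule inj_onI)
    fix j j' assume j: "j \<in> {1..r-1}" and j': "j' \<in> {1..r-1}"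
      and eq: "block_classes R k j = block_classes R k j'"
    have "elt k j = elt k j'"
      using rainbow[OF R cls_in[OF R elt_in_ground[OF k j]] _ mem_cls[OF R elt_in_ground[OF k j]]
          elt_in_block[OF k j] _ elt_in_block[OF k j']] k eq mem_cls[OF R elt_in_ground[OF k j']]
      by (auto simp: block_classes_def)
    then show "j = j'" using elt_inj[OF k j k j'] by simp
  qed
qed

lemma class_avoids_block_iff:
  assumes k: "k \<in> {1..d+1}" and i: "i \<in> {1..r}"
  shows "R i \<inter> block k = {} \<longleftrightarrow> i \<notin> block_classes R k ` {1..r-1}"
proof -
  have "elt k j \<in> R i \<longleftrightarrow> block_classes R k j = i" if "j \<in> {1..r-1}" for j
    using mem_iff_cls[OF R i] elt_in_ground[OF k that] by (simp add: block_classes_def)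
  then show ?thesis unfolding block_eq[OF k] by blast
qed

lemma class_avoids_block_iff_missing:
  assumes k: "k \<in> {1..d+1}" and i: "i \<in> {1..r}"
  shows "R i \<inter> block k = {} \<longleftrightarrow> i = partial_perm.missing r (block_classes R k)"
proof -
  interpret partial_perm r "block_classes R k" by (rule block_classes_partial_perm[OF k])
  have "i \<notin> block_classes R k ` {1..r-1} \<longleftrightarrow> i \<in> {1..r} - block_classes R k ` {1..r-1}"
    using i by blast
  then show ?thesis unfolding class_avoids_block_iff[OF k i] missing_eq by simp
qed

end

end

definition move_pt :: "(nat \<Rightarrow> 'a set) \<Rightarrow> 'a \<Rightarrow> nat \<Rightarrow> nat \<Rightarrow> 'a set" where
  "move_pt R a m = (\<lambda>i. if i = m then insert a (R i) else R i - {a})"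

context bmz_collection
begin

context
  fixes R :: "nat \<Rightarrow> 'a set" and ka ja m :: nat and a :: 'a
  assumes R: "R \<in> bmz_R d r c"
    and ka: "ka \<in> {1..d+1}" and ja: "ja \<in> {1..r-1}" and a: "a = elt ka ja"
    and m: "m \<in> {1..r}" and avoid: "R m \<inter> block ka = {}"
begin

interpretation blk: partial_perm r "block_classes R ka"
  using block_classes_partial_perm[OF R ka] .

lemma avoiding_class_missing: "m = blk.missing"
  using class_avoids_block_iff_missing[OF R ka m] avoid by simp

lemma avoiding_class_unique: "i \<in> {1..r} \<Longrightarrow> R i \<inter> block ka = {} \<Longrightarrow> i = m"
  using class_avoids_block_iff_missing[OF R ka] avoiding_class_missing by simp

lemma a_in_block: "a \<in> block ka"
  using elt_in_block[OF ka ja] a by simp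

lemma a_in_ground: "a \<in> ground"
  using elt_in_ground[OF ka ja] a by simp

lemma mem_move_pt: "p \<in> move_pt R a m i \<longleftrightarrow> (p = a \<and> i = m) \<or> (p \<noteq> a \<and> p \<in> R i)"
  using avoid a_in_block by (auto simp: move_pt_def)

lemma move_pt_in_bmz_R: "move_pt R a m \<in> bmz_R d r c"
proof (rule bmz_R_intro)
  fix i k p p'
  assume i: "i \<in> {1..r}" and k: "k \<in> {1..d+2}"
    and p: "p \<in> move_pt R a m i" "p \<in> block k" and p': "p' \<in> move_pt R a m i" "p' \<in> block k"
  have not_with_a: "q = a"
    if "q \<in> move_pt R a m i" "q \<in> block k" "a \<in> move_pt R a m i" "a \<in> block k" for q
  proof (rule ccontr)
    assume "q \<noteq> a"
    have "i = m" using that(3) mem_move_pt[of a i] by simp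
    moreover have "k = ka" using that(4) block_of_elt[OF ka ja k] a by simp
    ultimately show False using that(1,2) \<open>q \<noteq> a\<close> mem_move_pt[of q i] avoid by auto
  qed
  consider "p = a" | "p' = a" | "p \<noteq> a" "p' \<noteq> a" by blast
  then show "p = p'"
  proof cases
    case 1
    then show ?thesis using not_with_a[OF p'] p by simp
  next
    case 2
    then show ?thesis using not_with_a[OF p] p' by simp
  next
    case 3
    then show ?thesis using p p' mem_move_pt[of p i] mem_move_pt[of p' i] rainbow[OF R i k, of p p']
      by simp
  qed
next
  fix i assume "i \<notin> {1..r}"
  then show "move_pt R a m i = {}" using class_outside[OF R] m by (auto simp: move_pt_def)
next
  fix i assume "i \<in> {1..r}"
  then show "move_pt R a m i \<subseteq> ground"
    using class_in_ground[OF R] a_in_ground by (auto simp: move_pt_def)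
next
  fix i j p assume "i \<in> {1..r}" "j \<in> {1..r}" "p \<in> move_pt R a m i" "p \<in> move_pt R a m j"
  then show "i = j"
    using classes_disjoint[OF R, of i j p] mem_move_pt[of p i] mem_move_pt[of p j] by auto
next
  fix p assume "p \<in> ground"
  then show "\<exists>i\<in>{1..r}. p \<in> move_pt R a m i"
    using classes_cover[OF R, of p] m mem_move_pt[of p] by (cases "p = a") auto
next
  show "z \<in> move_pt R a m r"
    using z_in_last_class[OF R] elt_ne_z[OF ka ja] a mem_move_pt by simp
qed

lemma cls_move_pt: "p \<in> ground \<Longrightarrow> cls (move_pt R a m) p = (if p = a then m else cls R p)"
  using cls_eq[OF move_pt_in_bmz_R] mem_move_pt m cls_in[OF R] mem_cls[OF R] by auto

text \<open>Only pi_ka changes, and it changes by a transposition.\<close>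
lemma csgn_move_pt: "csgn d r c (move_pt R a m) = - csgn d r c R"
proof -
  let ?R' = "move_pt R a m"
  have same_classes: "block_classes ?R' k j = block_classes R k j"
    if "k \<in> {1..d+1}" "j \<in> {1..r-1}" "elt k j \<noteq> a" for k j
    using that cls_move_pt elt_in_ground by (simp add: block_classes_def)
  have other: "bmz_pi r c ?R' k = bmz_pi r c R k" if k: "k \<in> {1..d+1}" "k \<noteq> ka" for k
    unfolding bmz_pi_eq using elt_inj[OF k(1) _ ka ja] k a
    by (intro perm_completion_cong same_classes) auto
  have "sign (bmz_pi r c ?R' ka) = - sign (bmz_pi r c R ka)"
    unfolding bmz_pi_eq
  proof (rule blk.completion_redirect_sign[OF ja])
    show "block_classes ?R' ka j = block_classes R ka j" if "j \<in> {1..r-1}" "j \<noteq> ja" for j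
      using that elt_inj[OF ka _ ka ja] a by (intro same_classes ka) auto
    show "block_classes ?R' ka ja = blk.missing"
      using cls_move_pt[OF a_in_ground] a avoiding_class_missing by (simp add: block_classes_def)
  qed
  moreover have "csgn d r c R'' = sign (bmz_pi r c R'' ka) *
      (\<Prod>k\<in>{1..d+1} - {ka}. sign (bmz_pi r c R'' k))" for R''
    unfolding csgn_def by (rule prod.remove) (use ka in auto)
  moreover have "(\<Prod>k\<in>{1..d+1} - {ka}. sign (bmz_pi r c ?R' k)) =
      (\<Prod>k\<in>{1..d+1} - {ka}. sign (bmz_pi r c R k))"
    using other by (intro prod.cong) auto
  ultimately show ?thesis by simp
qed

text \<open>Any other member of bold-R containing R - z - a classwise is the move of a into m:
  it agrees with R off a, and a cannot stay in its class, so it must go to a class of R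
  avoiding C_ka, which is m.\<close>
lemma move_pt_unique:
  assumes R'': "R'' \<in> bmz_R d r c" and ne: "R'' \<noteq> R"
    and contains: "\<forall>i\<in>{1..r}. R i - {z} - {a} \<subseteq> R'' i"
  shows "R'' = move_pt R a m"
proof -
  have same: "cls R'' p = cls R p" if p: "p \<in> ground" "p \<noteq> a" for p
  proof (cases "p = z")
    case True
    then show ?thesis
      using cls_eq[OF R _ z_in_last_class[OF R]] cls_eq[OF R'' _ z_in_last_class[OF R'']] r_ge_2
      by simp
  next
    case False
    then show ?thesis using contains mem_cls[OF R p(1)] cls_in[OF R p(1)] p(2)
      by (intro cls_eq[OF R'']) auto
  qed
  define i2 where "i2 = cls R'' a"
  have i2: "i2 \<in> {1..r}" "a \<in> R'' i2"
    unfolding i2_def using cls_in[OF R'' a_in_ground] mem_cls[OF R'' a_in_ground] by auto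
  have "i2 \<noteq> cls R a"
    using bmz_R_eqI[OF R'' R] same ne unfolding i2_def by metis
  then have "a \<notin> R i2" using cls_eq[OF R i2(1)] by auto
  have "R i2 \<inter> block ka = {}"
  proof (rule ccontr)
    assume "R i2 \<inter> block ka \<noteq> {}"
    then obtain p where p: "p \<in> R i2" "p \<in> block ka" by auto
    with \<open>a \<notin> R i2\<close> have "p \<noteq> a" by auto
    then have "p \<in> R'' i2"
      using same[of p] p class_in_ground[OF R i2(1)] mem_iff_cls[OF R'' i2(1)]
        mem_iff_cls[OF R i2(1)] by auto
    then show False
      using rainbow[OF R'' i2(1) _ _ p(2) i2(2) a_in_block] ka \<open>p \<noteq> a\<close> by auto
  qed
  then have "i2 = m" using avoiding_class_unique i2(1) by blast
  show ?thesis
    using \<open>i2 = m\<close> same cls_move_pt unfolding i2_def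
    by (intro bmz_R_eqI[OF R'' move_pt_in_bmz_R]) auto
qed

end

end

context bmz_collection
begin

theorem unique_neighbour:
  assumes R: "R \<in> bmz_R d r c" and a: "a \<in> ground - {z}"
  shows "\<exists>R'. R' \<in> bmz_R d r c \<and> R' \<noteq> R \<and> (\<forall>i\<in>{1..r}. R i - {z} - {a} \<subseteq> R' i - {z}) \<and>
           csgn d r c R' = - csgn d r c R \<and>
           (\<forall>R''. R'' \<in> bmz_R d r c \<and> R'' \<noteq> R \<and> (\<forall>i\<in>{1..r}. R i - {z} - {a} \<subseteq> R'' i - {z})
              \<longrightarrow> R'' = R')"
proof -
  obtain ka ja where ka: "ka \<in> {1..d+1}" and ja: "ja \<in> {1..r-1}" and a_eq: "a = elt ka ja"
    using a by (auto elim: ground_elt)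
  interpret blk: partial_perm r "block_classes R ka" by (rule block_classes_partial_perm[OF R ka])
  have avoid: "R blk.missing \<inter> block ka = {}"
    using class_avoids_block_iff_missing[OF R ka blk.missing_in] by simp
  note move = ka ja a_eq blk.missing_in avoid
  let ?R' = "move_pt R a blk.missing"
  have "a \<in> ?R' blk.missing" "a \<notin> R blk.missing"
    using mem_move_pt[OF R move] avoid a_in_block[OF R move] by auto
  then have "?R' \<noteq> R" by metis
  moreover have "\<forall>i\<in>{1..r}. R i - {z} - {a} \<subseteq> ?R' i - {z}"
    using mem_move_pt[OF R move] by auto
  moreover have "R'' = ?R'"
    if "R'' \<in> bmz_R d r c" "R'' \<noteq> R" "\<forall>i\<in>{1..r}. R i - {z} - {a} \<subseteq> R'' i - {z}" for R''
    using move_pt_unique[OF R move that(1,2)] that(3) by blast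
  ultimately show ?thesis
    using move_pt_in_bmz_R[OF R move] csgn_move_pt[OF R move] by blast
qed

end

theorem lemma8:
  fixes c :: "nat \<Rightarrow> real^'d" and w :: "nat \<Rightarrow> real^'m"
    and r :: nat and R :: "nat \<Rightarrow> (real^'d) set" and a :: "real^'d"
  assumes "r \<ge> 2"
    and "CARD('m) = r - 1"
    and "regular_simplex_centered r w"
    and "inj_on c {1 .. bmzN CARD('d) r + 1}"
    and "R \<in> bmz_R CARD('d) r c"
    and "a \<in> bmz_ground CARD('d) r c - {bmz_z CARD('d) r c}"
  shows "\<exists>R'. R' \<in> bmz_R CARD('d) r c \<and> R' \<noteq> R \<and>
           bmz_Phi w r (remove_pt (remove_pt R (bmz_z CARD('d) r c)) a)
             \<subseteq> bmz_Phi w r (remove_pt R' (bmz_z CARD('d) r c)) \<and>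
           csgn CARD('d) r c R' = - csgn CARD('d) r c R \<and>
           (\<forall>R''. R'' \<in> bmz_R CARD('d) r c \<and> R'' \<noteq> R \<and>
              bmz_Phi w r (remove_pt (remove_pt R (bmz_z CARD('d) r c)) a)
                \<subseteq> bmz_Phi w r (remove_pt R'' (bmz_z CARD('d) r c)) \<longrightarrow> R'' = R')"
proof -
  interpret bmz_collection "CARD('d)" r c
    using assms(1,4) by unfold_locales
  have face_iff: "bmz_Phi w r (remove_pt (remove_pt R z) a) \<subseteq> bmz_Phi w r (remove_pt R' z)
      \<longleftrightarrow> (\<forall>i\<in>{1..r}. R i - {z} - {a} \<subseteq> R' i - {z})" for R'
    by (simp add: bmz_Phi_subset_iff[OF assms(1,3)] remove_pt_def)
  show ?thesis
    unfolding face_iff using unique_neighbour[OF assms(5,6)] .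
qed

end
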